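(* There exists an absolute constant $C>0$ (one can take $C=40$) such that the following holds. Let $k\ge2$, $n>0$, $\lambda>0$, $\alpha\in(0,1]$, and let $\mathbf{p}$ be a distribution on $[k]$. Let $N\sim\mathbf{Poi}(n)$ and, given $N$, let $x_1,\dots,x_N$ be i.i.d. from $\mathbf{p}$. Each user $i$ outputs, for each $j\in[k]$, the message $(j,\mathbf{1}\{x_i=j\})$ together with $s_{i,j}\sim\mathbf{Poi}(\lambda/N)$ additional messages $(j,b)$ where each $b\sim\mathrm{Bernoulli}(1/2)$, all randomness independent. Let $N_j$ be the total number of messages equal to $(j,1)$, $\mu=\frac nk+\frac\lambda2$, $Z=\frac kn\sum_{j=1}^k\big((N_j-\mu)^2-N_j\big)$, and $\tau=2n\alpha^2$. If $n\ge C\cdot\frac{k^{3/4}\mu^{1/2}}{\alpha}$, then $\Pr[Z\ge\tau]\le\frac13$ when $\mathbf{p}=\mathbf{U}$, and $\Pr[Z\le\tau]\le\frac13$ when $d_{TV}(\mathbf{p},\mathbf{U})>\alpha$.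
   Context: $\mathbf{U}$ is the uniform distribution on $[k]=\{1,\dots,k\}$ and $d_{TV}(\mathbf{p},\mathbf{q})=\frac12\|\mathbf{p}-\mathbf{q}\|_1$. *)

theory Defs
  imports "HOL-Probability.Probability" "HOL-Library.Multiset"
begin

fun msum_pmf :: "'a multiset pmf list \<Rightarrow> 'a multiset pmf" where
  "msum_pmf [] = return_pmf {#}"
| "msum_pmf (D # Ds) = do { A \<leftarrow> D; B \<leftarrow> msum_pmf Ds; return_pmf (A + B) }"

definition coord_msgs :: "real \<Rightarrow> nat \<Rightarrow> nat \<Rightarrow> nat \<Rightarrow> (nat \<times> bool) multiset pmf" where
  "coord_msgs lam N j x = do {
     s \<leftarrow> poisson_pmf (lam / real N);
     bs \<leftarrow> replicate_pmf s (bernoulli_pmf (1/2));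
     return_pmf ({#(j, x = j)#} + mset (map (\<lambda>b. (j, b)) bs)) }"

definition user_msgs :: "nat \<Rightarrow> real \<Rightarrow> nat \<Rightarrow> nat pmf \<Rightarrow> (nat \<times> bool) multiset pmf" where
  "user_msgs k lam N p = do {
     x \<leftarrow> p;
     msum_pmf (map (\<lambda>j. coord_msgs lam N j x) [1..<k+1]) }"

definition protocol :: "nat \<Rightarrow> real \<Rightarrow> real \<Rightarrow> nat pmf \<Rightarrow> (nat \<times> bool) multiset pmf" where
  "protocol k n lam p = do {
     N \<leftarrow> poisson_pmf n;
     msum_pmf (replicate N (user_msgs k lam N p)) }"

definition Nj :: "(nat \<times> bool) multiset \<Rightarrow> nat \<Rightarrow> nat" where
  "Nj M j = count M (j, True)"

definition mu :: "nat \<Rightarrow> real \<Rightarrow> real \<Rightarrow> real" where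
  "mu k n lam = n / real k + lam / 2"

definition Zstat :: "nat \<Rightarrow> real \<Rightarrow> real \<Rightarrow> (nat \<times> bool) multiset \<Rightarrow> real" where
  "Zstat k n lam M = (real k / n) * (\<Sum>j = 1..k. (real (Nj M j) - mu k n lam)^2 - real (Nj M j))"

definition unif :: "nat \<Rightarrow> nat pmf" where
  "unif k = pmf_of_set {1..k}"

definition dTV :: "nat \<Rightarrow> nat pmf \<Rightarrow> nat pmf \<Rightarrow> real" where
  "dTV k p q = (1/2) * (\<Sum>j = 1..k. \<bar>pmf p j - pmf q j\<bar>)"

end

theory Submission
  imports Defs "HOL-Library.Function_Algebras"
begin

text \<open>
  Write \<open>L\<^sub>j = n p\<^sub>j + \<lambda>/2\<close>, so that \<open>\<mu> = n/k + \<lambda>/2\<close> is the common value of the \<open>L\<^sub>j\<close> under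
  \<open>U\<close>. Poisson splitting turns the \<open>Poi(n)\<close> users into independent \<open>Poi(n p\<^sub>j)\<close> counts of
  messages \<open>(j, 1)\<close>, and, given \<open>N \<ge> 1\<close>, each coordinate receives \<open>Poi(\<lambda>)\<close> noise messages of
  which \<open>Poi(\<lambda>/2)\<close> are ones. Hence, except on the event \<open>N = 0\<close> of probability \<open>e\<^sup>-\<^sup>n\<close>, the
  counts \<open>N\<^sub>j\<close> are independent \<open>Poi(L\<^sub>j)\<close>. For such counts \<open>(N\<^sub>j - \<mu>)\<^sup>2 - N\<^sub>j\<close> has mean
  \<open>(L\<^sub>j - \<mu>)\<^sup>2\<close> and variance \<open>2 L\<^sub>j\<^sup>2 + 4 (L\<^sub>j - \<mu>)\<^sup>2 L\<^sub>j\<close>, so Chebyshev's inequality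
  controls the deviation of \<open>(n/k) Z\<close> from \<open>D = \<Sum>\<^sub>j (L\<^sub>j - \<mu>)\<^sup>2\<close>. Under \<open>U\<close> we have \<open>D = 0\<close>;
  if \<open>d\<^sub>T\<^sub>V(p, U) > \<alpha>\<close>, Cauchy-Schwarz gives \<open>D \<ge> 4 n\<^sup>2 \<alpha>\<^sup>2 / k\<close>, twice the rescaled
  threshold. The sample-size condition makes each Chebyshev bound at most \<open>1/4\<close> and
  \<open>e\<^sup>-\<^sup>n \<le> 1/12\<close>.
\<close>

definition add_pmf :: "'a::plus pmf \<Rightarrow> 'a pmf \<Rightarrow> 'a pmf" where
  "add_pmf X Y = map_pmf (\<lambda>(x, y). x + y) (pair_pmf X Y)"

lemma add_pmf_bind: "add_pmf X Y = do {x \<leftarrow> X; y \<leftarrow> Y; return_pmf (x + y)}"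
  unfolding add_pmf_def pair_pmf_def map_pmf_def by (simp add: bind_assoc_pmf bind_return_pmf)

lemma add_pmf_commute: "add_pmf X Y = add_pmf Y (X :: 'a::ab_semigroup_add pmf)"
  unfolding add_pmf_bind by (subst bind_commute_pmf) (simp add: add.commute)

lemma add_pmf_assoc: "add_pmf (add_pmf X Y) Z = add_pmf X (add_pmf Y (Z :: 'a::semigroup_add pmf))"
  unfolding add_pmf_bind by (simp add: bind_assoc_pmf bind_return_pmf add.assoc)

lemma add_pmf_left_commute:
  "add_pmf X (add_pmf Y Z) = add_pmf Y (add_pmf X (Z :: 'a::ab_semigroup_add pmf))"
  by (simp only: add_pmf_assoc[symmetric] add_pmf_commute[of X Y])

lemma add_pmf_return_0 [simp]:
  "add_pmf X (return_pmf 0) = (X :: 'a::monoid_add pmf)"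
  "add_pmf (return_pmf 0) X = X"
  unfolding add_pmf_bind by (simp_all add: bind_return_pmf bind_return_pmf')

lemma add_pmf_return_left: "add_pmf (return_pmf a) Y = map_pmf ((+) a) Y"
  unfolding add_pmf_bind by (simp add: bind_return_pmf map_pmf_def)

lemma add_pmf_bind_left: "add_pmf (bind_pmf A F) Y = bind_pmf A (\<lambda>x. add_pmf (F x) Y)"
  unfolding add_pmf_bind by (simp add: bind_assoc_pmf)

lemma add_pmf_map_left: "add_pmf (map_pmf f A) Y = bind_pmf A (\<lambda>x. add_pmf (return_pmf (f x)) Y)"
  unfolding map_pmf_def add_pmf_bind_left ..

lemma map_add_pmf:
  assumes "\<And>a b. h (a + b) = h a + h b"
  shows "map_pmf h (add_pmf X Y) = add_pmf (map_pmf h X) (map_pmf h Y)"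
  unfolding add_pmf_bind by (simp add: map_bind_pmf bind_map_pmf assms)

definition sum_pmf :: "'a::comm_monoid_add pmf list \<Rightarrow> 'a pmf" where
  "sum_pmf Ds = foldr add_pmf Ds (return_pmf 0)"

lemma sum_pmf_simps [simp]:
  "sum_pmf [] = return_pmf 0"
  "sum_pmf (D # Ds) = add_pmf D (sum_pmf Ds)"
  by (simp_all add: sum_pmf_def)

lemma msum_pmf_eq_sum_pmf: "msum_pmf Ds = sum_pmf Ds"
  by (induction Ds) (simp_all add: add_pmf_bind)

lemma map_sum_pmf:
  assumes "h 0 = 0" and "\<And>a b. h (a + b) = h a + h b"
  shows "map_pmf h (sum_pmf Ds) = sum_pmf (map (map_pmf h) Ds)"
  by (induction Ds) (simp_all add: assms map_add_pmf)

lemma sum_pmf_map_add: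
  "sum_pmf (map (\<lambda>i. add_pmf (X i) (Y i)) xs) = add_pmf (sum_pmf (map X xs)) (sum_pmf (map Y xs))"
  by (induction xs) (simp_all add: add_pmf_assoc add_pmf_left_commute)

lemma sum_pmf_replicate_add:
  "sum_pmf (replicate N (add_pmf X Y)) = add_pmf (sum_pmf (replicate N X)) (sum_pmf (replicate N Y))"
  using sum_pmf_map_add[of "\<lambda>_. X" "\<lambda>_. Y" "replicate N ()"] by simp

lemma sum_pmf_return: "sum_pmf (map (\<lambda>i. return_pmf (f i)) xs) = return_pmf (\<Sum>i\<leftarrow>xs. f i)"
  by (induction xs) (simp_all add: add_pmf_return_left)

lemma Pi_pmf_outside: "finite A \<Longrightarrow> f \<in> set_pmf (Pi_pmf A d P) \<Longrightarrow> x \<notin> A \<Longrightarrow> f x = d"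
  using set_Pi_pmf_subset[of A d P] by blast

lemma add_pmf_Pi_pmf:
  fixes P Q :: "'a \<Rightarrow> 'b::monoid_add pmf"
  assumes "finite A"
  shows "add_pmf (Pi_pmf A 0 P) (Pi_pmf A 0 Q) = Pi_pmf A 0 (\<lambda>i. add_pmf (P i) (Q i))"
proof -
  have "Pi_pmf A 0 (\<lambda>i. add_pmf (P i) (Q i)) =
      do {f \<leftarrow> Pi_pmf A 0 P; Pi_pmf A 0 (\<lambda>i. do {y \<leftarrow> Q i; return_pmf (f i + y)})}"
    unfolding add_pmf_bind by (rule Pi_pmf_bind[OF assms])
  also have "\<dots> = do {f \<leftarrow> Pi_pmf A 0 P; g \<leftarrow> Pi_pmf A 0 Q; Pi_pmf A 0 (\<lambda>i. return_pmf (f i + g i))}"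
    by (rule bind_pmf_cong[OF refl], rule Pi_pmf_bind[OF assms])
  also have "\<dots> = add_pmf (Pi_pmf A 0 P) (Pi_pmf A 0 Q)"
    unfolding add_pmf_bind
  proof (intro bind_pmf_cong refl)
    fix f g assume f: "f \<in> set_pmf (Pi_pmf A 0 P)" and g: "g \<in> set_pmf (Pi_pmf A 0 Q)"
    have "f x = 0" "g x = 0" if "x \<notin> A" for x
      using Pi_pmf_outside[OF assms f that] Pi_pmf_outside[OF assms g that] by simp_all
    then show "Pi_pmf A 0 (\<lambda>i. return_pmf (f i + g i)) = return_pmf (f + g)"
      using assms by (auto simp: fun_eq_iff)
  qed
  finally show ?thesis ..
qed

lemma sum_pmf_Pi_pmf_singletons:
  fixes Q :: "'a \<Rightarrow> 'b::comm_monoid_add pmf"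
  assumes "distinct js"
  shows "sum_pmf (map (\<lambda>j. map_pmf (\<lambda>c. 0(j := c)) (Q j)) js) = Pi_pmf (set js) 0 Q"
  using assms
proof (induction js)
  case (Cons j js)
  have "Pi_pmf (set (j # js)) 0 Q = do {c \<leftarrow> Q j; f \<leftarrow> Pi_pmf (set js) 0 Q; return_pmf (f(j := c))}"
    using Cons.prems by (simp add: Pi_pmf_insert')
  also have "\<dots> = add_pmf (map_pmf (\<lambda>c. 0(j := c)) (Q j)) (Pi_pmf (set js) 0 Q)"
    unfolding add_pmf_bind bind_map_pmf
  proof (intro bind_pmf_cong refl)
    fix c f assume "f \<in> set_pmf (Pi_pmf (set js) 0 Q)"
    then have "f j = 0" using Cons.prems Pi_pmf_outside[of "set js" f 0 Q j] by simp
    then show "return_pmf (f(j := c)) = return_pmf (0(j := c) + f)"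
      by (auto simp: fun_eq_iff)
  qed
  moreover have "sum_pmf (map (\<lambda>j. map_pmf (\<lambda>c. 0(j := c)) (Q j)) js) = Pi_pmf (set js) 0 Q"
    using Cons.prems by (intro Cons.IH) simp
  ultimately show ?case by (simp only: list.map sum_pmf_simps)
qed (simp add: zero_fun_def)

lemma prob_bind_pmf_le_if_eq_except:
  assumes "\<And>x. x \<noteq> a \<Longrightarrow> F x = G x"
  shows "measure_pmf.prob (bind_pmf M F) E \<le> measure_pmf.prob (bind_pmf M G) E + pmf M a"
proof -
  have le: "emeasure (F x) E \<le> emeasure (G x) E + indicator {a} x" for x
    using assms[of x] measure_pmf.emeasure_le_1[of "F a" E] by (cases "x = a") (auto simp: add_increasing)
  have "emeasure (bind_pmf M F) E \<le> (\<integral>\<^sup>+x. emeasure (G x) E + indicator {a} x \<partial>M)"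
    using le by (simp add: nn_integral_mono)
  also have "\<dots> = emeasure (bind_pmf M G) E + pmf M a"
    by (simp add: nn_integral_add emeasure_pmf_single)
  finally have "ennreal (measure_pmf.prob (bind_pmf M F) E) \<le>
      ennreal (measure_pmf.prob (bind_pmf M G) E) + ennreal (pmf M a)"
    by (simp add: measure_pmf.emeasure_eq_measure)
  then show ?thesis
    by (simp flip: ennreal_plus)
qed

section \<open>Poisson distributions\<close>

text \<open>\<open>poisson_pmf\<close> is only specified for positive rates.\<close>
definition pois :: "real \<Rightarrow> nat pmf" where
  "pois r = (if r \<le> 0 then return_pmf 0 else poisson_pmf r)"

lemma pmf_pois: "0 \<le> r \<Longrightarrow> pmf (pois r) x = r ^ x / fact x * exp (- r)"
  by (cases "r = 0") (auto simp: pois_def indicator_def)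

lemma pois_0 [simp]: "pois 0 = return_pmf 0"
  by (simp add: pois_def)

lemma pois_eq_poisson_pmf: "0 < r \<Longrightarrow> pois r = poisson_pmf r"
  by (simp add: pois_def)

lemma expectation_pmf_nat_sums:
  fixes M :: "nat pmf" and g :: "nat \<Rightarrow> real"
  assumes sums: "(\<lambda>x. pmf M x * g x) sums s" and nonneg: "\<And>x. 0 \<le> g x"
  shows "integrable M g" and "measure_pmf.expectation M g = s"
proof -
  have int: "integrable (count_space UNIV) (\<lambda>x. pmf M x * g x)"
    using sums nonneg unfolding integrable_count_space_nat_iff
    by (simp add: sums_iff abs_mult pmf_nonneg)
  then show "integrable M g"
    unfolding measure_pmf_eq_density by (subst integrable_density) auto
  have "measure_pmf.expectation M g = (\<integral>x. pmf M x * g x \<partial>count_space UNIV)"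
    unfolding measure_pmf_eq_density by (subst integral_density) auto
  also have "\<dots> = s"
    using int sums by (subst integral_count_space_nat) (simp_all add: sums_iff)
  finally show "measure_pmf.expectation M g = s" .
qed

lemma fact_eq_fact_mult_binomial:
  assumes "x \<le> m"
  shows "(fact m :: real) = fact x * fact (m - x) * real (m choose x)"
proof -
  have "real (fact m) = real (fact x * fact (m - x) * (m choose x))"
    using binomial_fact_lemma[OF assms] by simp
  then show ?thesis by (simp only: of_nat_mult of_nat_fact)
qed

lemma add_pmf_pois:
  assumes "0 \<le> a" "0 \<le> b"
  shows "add_pmf (pois a) (pois b) = pois (a + b)"
proof (rule pmf_eqI)
  fix m :: nat
  have shift: "pmf (map_pmf ((+) x) (pois b)) m = (if x \<le> m then pmf (pois b) (m - x) else 0)" for x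
  proof -
    have "(+) x -` {m} = (if x \<le> m then {m - x} else {})" by auto
    then show ?thesis by (simp add: pmf_map measure_pmf_single)
  qed
  have "pmf (add_pmf (pois a) (pois b)) m =
      (\<Sum>x\<le>m. (if x \<le> m then pmf (pois b) (m - x) else 0) * pmf (pois a) x)"
    unfolding add_pmf_bind bind_return_pmf map_pmf_def[symmetric] pmf_bind shift
    by (rule integral_measure_pmf_real) (auto split: if_splits)
  also have "\<dots> = (\<Sum>x\<le>m. real (m choose x) * a ^ x * b ^ (m - x)) / fact m * exp (- (a + b))"
    unfolding sum_divide_distrib sum_distrib_right
  proof (intro sum.cong refl)
    fix x assume "x \<in> {..m}"
    then show "(if x \<le> m then pmf (pois b) (m - x) else 0) * pmf (pois a) x =
        real (m choose x) * a ^ x * b ^ (m - x) / fact m * exp (- (a + b))"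
      using assms by (simp add: pmf_pois fact_eq_fact_mult_binomial[of x m] exp_add[symmetric] field_simps)
  qed
  also have "\<dots> = pmf (pois (a + b)) m"
    using assms by (simp add: pmf_pois binomial_ring add.commute)
  finally show "pmf (add_pmf (pois a) (pois b)) m = pmf (pois (a + b)) m" .
qed

lemma bind_pois_binomial:
  assumes r: "0 \<le> r" and q: "0 \<le> q" "q \<le> 1"
  shows "bind_pmf (pois r) (\<lambda>s. binomial_pmf s q) = pois (q * r)"
proof (rule pmf_eqI)
  fix c :: nat
  define g where "g = (\<lambda>s. real (s choose c) * q ^ c * (1 - q) ^ (s - c))"
  define f where "f = (\<lambda>s. pmf (pois r) s * g s)"
  have "f (m + c) = exp (- r) * (q * r) ^ c / fact c * (((1 - q) * r) ^ m /\<^sub>R fact m)" for m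
  proof -
    have "real ((m + c) choose c) = fact (m + c) / (fact c * fact m)"
      using fact_eq_fact_mult_binomial[of c "m + c"] by simp
    then show ?thesis
      using r by (simp add: f_def g_def pmf_pois power_add power_mult_distrib) (simp add: field_simps)
  qed
  then have "(\<lambda>m. f (m + c)) sums (exp (- r) * (q * r) ^ c / fact c * exp ((1 - q) * r))"
    by (simp only: sums_mult exp_converges)
  then have "f sums (exp (- r) * (q * r) ^ c / fact c * exp ((1 - q) * r))"
    by (subst (asm) sums_iff_shift) (simp add: f_def g_def binomial_eq_0)
  also have "exp (- r) * (q * r) ^ c / fact c * exp ((1 - q) * r) = pmf (pois (q * r)) c"
    using r q by (simp add: pmf_pois exp_add[symmetric] algebra_simps)
  finally have "f sums pmf (pois (q * r)) c" .
  moreover have "0 \<le> g s" for s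
    using q by (simp add: g_def)
  ultimately have "measure_pmf.expectation (pois r) g = pmf (pois (q * r)) c"
    unfolding f_def by (rule expectation_pmf_nat_sums(2))
  then show "pmf (bind_pmf (pois r) (\<lambda>s. binomial_pmf s q)) c = pmf (pois (q * r)) c"
    using q by (simp add: pmf_bind g_def)
qed

definition falling_factorial :: "nat \<Rightarrow> nat \<Rightarrow> real" where
  "falling_factorial q x = (\<Prod>i<q. real x - real i)"

lemma falling_factorial_eq_0: "x < q \<Longrightarrow> falling_factorial q x = 0"
  unfolding falling_factorial_def by (rule prod_zero) auto

lemma falling_factorial_nonneg: "0 \<le> falling_factorial q x"
proof (cases "x < q")
  case True
  then show ?thesis by (simp add: falling_factorial_eq_0)
next
  case False
  then show ?thesis unfolding falling_factorial_def by (intro prod_nonneg) auto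
qed

lemma falling_factorial_mult_fact: "falling_factorial q (m + q) * fact m = fact (m + q)"
proof (induction q arbitrary: m)
  case (Suc q)
  have "falling_factorial (Suc q) (m + Suc q) = falling_factorial q (Suc m + q) * real (Suc m)"
    by (simp add: falling_factorial_def)
  then have "falling_factorial (Suc q) (m + Suc q) * fact m = falling_factorial q (Suc m + q) * fact (Suc m)"
    by (simp add: algebra_simps)
  also have "\<dots> = fact (Suc m + q)" by (rule Suc.IH)
  finally show ?case by simp
qed (simp add: falling_factorial_def)

lemma pois_falling_factorial_moment:
  assumes r: "0 \<le> r"
  shows "integrable (pois r) (falling_factorial q)"
    and "measure_pmf.expectation (pois r) (falling_factorial q) = r ^ q"
proof -
  define f where "f = (\<lambda>x. pmf (pois r) x * falling_factorial q x)"
  have "f (m + q) = exp (- r) * r ^ q * (r ^ m /\<^sub>R fact m)" for m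
    using r falling_factorial_mult_fact[of q m]
    by (simp add: f_def pmf_pois power_add field_simps)
  then have "(\<lambda>m. f (m + q)) sums (exp (- r) * r ^ q * exp r)"
    by (simp only: sums_mult exp_converges)
  then have "f sums (exp (- r) * r ^ q * exp r)"
    by (subst (asm) sums_iff_shift) (simp add: f_def falling_factorial_eq_0)
  then have "(\<lambda>x. pmf (pois r) x * falling_factorial q x) sums r ^ q"
    by (simp add: f_def exp_minus field_simps)
  from expectation_pmf_nat_sums[OF this falling_factorial_nonneg]
  show "integrable (pois r) (falling_factorial q)"
    and "measure_pmf.expectation (pois r) (falling_factorial q) = r ^ q" .
qed

lemma pois_expectation_poly4:
  fixes a0 a1 a2 a3 a4 :: real
  assumes r: "0 \<le> r"
  defines "P \<equiv> \<lambda>x. a0 + a1 * real x + a2 * real x ^ 2 + a3 * real x ^ 3 + a4 * real x ^ 4"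
  shows "integrable (pois r) P"
    and "measure_pmf.expectation (pois r) P =
      a0 + a1 * r + a2 * (r^2 + r) + a3 * (r^3 + 3*r^2 + r) + a4 * (r^4 + 6*r^3 + 7*r^2 + r)"
proof -
  have ff: "falling_factorial (Suc 0) x = real x" "falling_factorial 2 x = real x * (real x - 1)"
    "falling_factorial 3 x = real x * (real x - 1) * (real x - 2)"
    "falling_factorial 4 x = real x * (real x - 1) * (real x - 2) * (real x - 3)" for x
    by (simp_all add: falling_factorial_def numeral_eq_Suc lessThan_Suc)
  have P: "P = (\<lambda>x. a0 + (a1 + a2 + a3 + a4) * falling_factorial (Suc 0) x
      + (a2 + 3 * a3 + 7 * a4) * falling_factorial 2 x + (a3 + 6 * a4) * falling_factorial 3 x
      + a4 * falling_factorial 4 x)"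
    by (rule ext) (simp add: P_def ff algebra_simps power2_eq_square power3_eq_cube power4_eq_xxxx)
  note moments = pois_falling_factorial_moment[OF r]
  show "integrable (pois r) P"
    unfolding P using moments by simp
  show "measure_pmf.expectation (pois r) P =
      a0 + a1 * r + a2 * (r^2 + r) + a3 * (r^3 + 3*r^2 + r) + a4 * (r^4 + 6*r^3 + 7*r^2 + r)"
    unfolding P using moments
    by (simp add: Bochner_Integration.integral_add algebra_simps power2_eq_square power3_eq_cube
        power4_eq_xxxx)
qed

text \<open>\<open>(y - m)\<^sup>2 - y\<close> is the summand of the statistic \<open>Z\<close>; under \<open>Poi(L)\<close> its mean is
  \<open>(L - m)\<^sup>2\<close>.\<close>

definition chi2_dev :: "real \<Rightarrow> real \<Rightarrow> nat \<Rightarrow> real" where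
  "chi2_dev m L y = (real y - m)^2 - real y - (L - m)^2"

lemma pois_chi2_dev:
  assumes L: "0 \<le> L"
  shows "integrable (pois L) (\<lambda>y. (chi2_dev m L y)^2)"
    and "measure_pmf.expectation (pois L) (chi2_dev m L) = 0"
    and "measure_pmf.expectation (pois L) (\<lambda>y. (chi2_dev m L y)^2) = 2 * L^2 + 4 * (L - m)^2 * L"
proof -
  define b where "b = - (2 * m + 1)"
  define c where "c = m^2 - (L - m)^2"
  have lin: "chi2_dev m L = (\<lambda>y. c + b * real y + 1 * real y ^ 2 + 0 * real y ^ 3 + 0 * real y ^ 4)"
    by (rule ext) (simp add: chi2_dev_def b_def c_def power2_eq_square algebra_simps)
  have sq: "(\<lambda>y. (chi2_dev m L y)^2) = (\<lambda>y. c^2 + (2*b*c) * real y + (b^2 + 2*c) * real y ^ 2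
      + (2*b) * real y ^ 3 + 1 * real y ^ 4)"
    by (rule ext) (simp add: chi2_dev_def b_def c_def power2_eq_square power3_eq_cube power4_eq_xxxx
        algebra_simps)
  show "integrable (pois L) (\<lambda>y. (chi2_dev m L y)^2)"
    unfolding sq by (rule pois_expectation_poly4[OF L])
  show "measure_pmf.expectation (pois L) (chi2_dev m L) = 0"
    unfolding lin pois_expectation_poly4[OF L] by (simp add: b_def c_def power2_eq_square algebra_simps)
  show "measure_pmf.expectation (pois L) (\<lambda>y. (chi2_dev m L y)^2) = 2 * L^2 + 4 * (L - m)^2 * L"
    unfolding sq pois_expectation_poly4[OF L]
    by (simp add: b_def c_def power2_eq_square power3_eq_cube power4_eq_xxxx algebra_simps)
qed

section \<open>Independent coordinates and Chebyshev's inequality\<close>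

lemma Pi_pmf_component_expectation:
  fixes P :: "'a \<Rightarrow> 'b pmf" and g :: "'b \<Rightarrow> real"
  assumes "finite S" "i \<in> S"
  shows "measure_pmf.expectation (Pi_pmf S d P) (\<lambda>v. g (v i)) = measure_pmf.expectation (P i) g"
    and "integrable (P i) g \<Longrightarrow> integrable (Pi_pmf S d P) (\<lambda>v. g (v i))"
proof -
  have P: "P i = map_pmf (\<lambda>v. v i) (Pi_pmf S d P)"
    using assms by (simp add: Pi_pmf_component)
  show "measure_pmf.expectation (Pi_pmf S d P) (\<lambda>v. g (v i)) = measure_pmf.expectation (P i) g"
    unfolding P by simp
  show "integrable (P i) g \<Longrightarrow> integrable (Pi_pmf S d P) (\<lambda>v. g (v i))"
    unfolding P by simp
qed

lemma Pi_pmf_two_components_expectation: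
  fixes P :: "'a \<Rightarrow> 'b pmf" and f g :: "'b \<Rightarrow> real"
  assumes S: "finite S" "i \<in> S" "j \<in> S" "i \<noteq> j"
    and int: "integrable (P i) f" "integrable (P j) g"
  shows "integrable (Pi_pmf S d P) (\<lambda>v. f (v i) * g (v j))"
    and "measure_pmf.expectation (Pi_pmf S d P) (\<lambda>v. f (v i) * g (v j)) =
      measure_pmf.expectation (P i) f * measure_pmf.expectation (P j) g"
proof -
  let ?M = "Pi_pmf S d P"
  define X where "X = (\<lambda>x v. if x = i then f (v i) else g (v j))"
  have "prob_space.indep_vars (measure_pmf ?M) (\<lambda>_. count_space UNIV) (\<lambda>x v. v x) S"
    by (rule indep_vars_Pi_pmf[OF S(1)])
  then have "prob_space.indep_vars (measure_pmf ?M) (\<lambda>_. borel) (\<lambda>x v. (if x = i then f else g) (v x)) S"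
    by (rule prob_space.indep_vars_compose2[OF measure_pmf.prob_space_axioms]) simp
  then have "prob_space.indep_vars (measure_pmf ?M) (\<lambda>_. borel) (\<lambda>x v. (if x = i then f else g) (v x)) {i, j}"
    by (rule prob_space.indep_vars_subset[OF measure_pmf.prob_space_axioms]) (use S in auto)
  then have indep: "prob_space.indep_vars (measure_pmf ?M) (\<lambda>_. borel) X {i, j}"
    by (rule iffD1[OF prob_space.indep_vars_cong[OF measure_pmf.prob_space_axioms], rotated 3]) (auto simp: X_def)
  have X_int: "integrable ?M (X x)" if "x \<in> {i, j}" for x
    using that S int by (auto simp: X_def intro: Pi_pmf_component_expectation(2))
  have prod_X: "(\<Prod>x\<in>{i, j}. X x v) = f (v i) * g (v j)" for v
    using S by (simp add: X_def)
  show "integrable ?M (\<lambda>v. f (v i) * g (v j))"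
    using prob_space.indep_vars_integrable[OF measure_pmf.prob_space_axioms _ indep X_int] by (simp add: prod_X)
  have "measure_pmf.expectation ?M (\<lambda>v. f (v i) * g (v j)) = (\<Prod>x\<in>{i, j}. measure_pmf.expectation ?M (X x))"
    using prob_space.indep_vars_lebesgue_integral[OF measure_pmf.prob_space_axioms _ indep X_int] by (simp add: prod_X)
  also have "\<dots> = measure_pmf.expectation (P i) f * measure_pmf.expectation (P j) g"
    using S by (simp add: X_def Pi_pmf_component_expectation(1))
  finally show "measure_pmf.expectation ?M (\<lambda>v. f (v i) * g (v j)) =
      measure_pmf.expectation (P i) f * measure_pmf.expectation (P j) g" .
qed

lemma Pi_pmf_centered_components_covariance:
  fixes P :: "'a \<Rightarrow> 'b pmf" and f :: "'a \<Rightarrow> 'b \<Rightarrow> real"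
  assumes S: "finite S" "i \<in> S" "j \<in> S"
    and sq: "\<And>j. j \<in> S \<Longrightarrow> integrable (P j) (\<lambda>y. (f j y)^2)"
    and centered: "\<And>j. j \<in> S \<Longrightarrow> measure_pmf.expectation (P j) (f j) = 0"
  shows "integrable (Pi_pmf S d P) (\<lambda>v. f i (v i) * f j (v j))"
    and "measure_pmf.expectation (Pi_pmf S d P) (\<lambda>v. f i (v i) * f j (v j)) =
      (if i = j then measure_pmf.expectation (P j) (\<lambda>y. (f j y)^2) else 0)"
proof -
  have int: "integrable (P j) (f j)" if "j \<in> S" for j
    by (rule measure_pmf.square_integrable_imp_integrable[OF _ sq[OF that]]) simp
  have "integrable (Pi_pmf S d P) (\<lambda>v. f i (v i) * f j (v j)) \<and>
      measure_pmf.expectation (Pi_pmf S d P) (\<lambda>v. f i (v i) * f j (v j)) =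
      (if i = j then measure_pmf.expectation (P j) (\<lambda>y. (f j y)^2) else 0)"
  proof (cases "i = j")
    case True
    then show ?thesis
      using Pi_pmf_component_expectation[OF S(1,3), where d=d and P=P and g="\<lambda>y. (f j y)^2"] sq[OF S(3)]
      by (simp add: power2_eq_square)
  next
    case False
    then show ?thesis
      using Pi_pmf_two_components_expectation[OF S False int[OF S(2)] int[OF S(3)]]
      by (simp add: centered S)
  qed
  then show "integrable (Pi_pmf S d P) (\<lambda>v. f i (v i) * f j (v j))"
    and "measure_pmf.expectation (Pi_pmf S d P) (\<lambda>v. f i (v i) * f j (v j)) =
      (if i = j then measure_pmf.expectation (P j) (\<lambda>y. (f j y)^2) else 0)"
    by simp_all
qed

lemma Pi_pmf_sum_components_moments:
  fixes P :: "'a \<Rightarrow> 'b pmf" and f :: "'a \<Rightarrow> 'b \<Rightarrow> real"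
  assumes S: "finite S"
    and sq: "\<And>j. j \<in> S \<Longrightarrow> integrable (P j) (\<lambda>y. (f j y)^2)"
    and centered: "\<And>j. j \<in> S \<Longrightarrow> measure_pmf.expectation (P j) (f j) = 0"
  defines "W \<equiv> \<lambda>v. \<Sum>j\<in>S. f j (v j)"
  shows "integrable (Pi_pmf S d P) (\<lambda>v. (W v)^2)"
    and "measure_pmf.expectation (Pi_pmf S d P) W = 0"
    and "measure_pmf.expectation (Pi_pmf S d P) (\<lambda>v. (W v)^2) =
      (\<Sum>j\<in>S. measure_pmf.expectation (P j) (\<lambda>y. (f j y)^2))"
proof -
  let ?M = "Pi_pmf S d P"
  note cov = Pi_pmf_centered_components_covariance[OF S _ _ sq centered, where d = d]
  have W2: "(W v)^2 = (\<Sum>i\<in>S. \<Sum>j\<in>S. f i (v i) * f j (v j))" for v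
    by (simp add: W_def power2_eq_square sum_product)
  show "integrable ?M (\<lambda>v. (W v)^2)"
    unfolding W2 by (intro Bochner_Integration.integrable_sum cov(1))
  have "integrable (P j) (f j)" if "j \<in> S" for j
    by (rule measure_pmf.square_integrable_imp_integrable[OF _ sq[OF that]]) simp
  then show "measure_pmf.expectation ?M W = 0"
    unfolding W_def using S centered
    by (subst Bochner_Integration.integral_sum)
      (auto intro: Pi_pmf_component_expectation(2) simp: Pi_pmf_component_expectation(1))
  have "measure_pmf.expectation ?M (\<lambda>v. (W v)^2) =
      (\<Sum>i\<in>S. measure_pmf.expectation ?M (\<lambda>v. \<Sum>j\<in>S. f i (v i) * f j (v j)))"
    unfolding W2 by (rule Bochner_Integration.integral_sum) (auto intro!: Bochner_Integration.integrable_sum cov(1))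
  also have "\<dots> = (\<Sum>i\<in>S. \<Sum>j\<in>S. measure_pmf.expectation ?M (\<lambda>v. f i (v i) * f j (v j)))"
    by (intro sum.cong refl Bochner_Integration.integral_sum cov(1))
  also have "\<dots> = (\<Sum>i\<in>S. \<Sum>j\<in>S. if i = j then measure_pmf.expectation (P j) (\<lambda>y. (f j y)^2) else 0)"
    by (intro sum.cong refl cov(2))
  also have "\<dots> = (\<Sum>j\<in>S. measure_pmf.expectation (P j) (\<lambda>y. (f j y)^2))"
    using S by simp
  finally show "measure_pmf.expectation ?M (\<lambda>v. (W v)^2) =
      (\<Sum>j\<in>S. measure_pmf.expectation (P j) (\<lambda>y. (f j y)^2))" .
qed

lemma Pi_pmf_sum_components_Chebyshev:
  fixes P :: "'a \<Rightarrow> 'b pmf" and f :: "'a \<Rightarrow> 'b \<Rightarrow> real"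
  assumes S: "finite S"
    and sq: "\<And>j. j \<in> S \<Longrightarrow> integrable (P j) (\<lambda>y. (f j y)^2)"
    and centered: "\<And>j. j \<in> S \<Longrightarrow> measure_pmf.expectation (P j) (f j) = 0"
    and a: "0 < a"
  shows "measure_pmf.prob (Pi_pmf S d P) {v. a \<le> \<bar>\<Sum>j\<in>S. f j (v j)\<bar>}
    \<le> (\<Sum>j\<in>S. measure_pmf.expectation (P j) (\<lambda>y. (f j y)^2)) / a^2"
  using measure_pmf.Chebyshev_inequality[of "\<lambda>v. \<Sum>j\<in>S. f j (v j)" "Pi_pmf S d P" a]
    Pi_pmf_sum_components_moments[OF S sq centered, where d=d] a
  by simp

section \<open>Poissonisation of the multinomial distribution\<close>

definition multinomial_pmf :: "nat \<Rightarrow> 'a pmf \<Rightarrow> ('a \<Rightarrow> nat) pmf" where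
  "multinomial_pmf N p = sum_pmf (replicate N (map_pmf (\<lambda>x. 0(x := 1)) p))"

definition multinomial_prob :: "'a set \<Rightarrow> 'a pmf \<Rightarrow> nat \<Rightarrow> ('a \<Rightarrow> nat) \<Rightarrow> real" where
  "multinomial_prob S p N d = (if (\<forall>i. i \<notin> S \<longrightarrow> d i = 0) \<and> sum d S = N
     then fact N / (\<Prod>i\<in>S. fact (d i)) * (\<Prod>i\<in>S. pmf p i ^ d i) else 0)"

lemma pmf_map_add_unit:
  fixes T :: "('a \<Rightarrow> nat) pmf"
  shows "pmf (map_pmf ((+) (0(x := 1))) T) d = (if 1 \<le> d x then pmf T (d(x := d x - 1)) else 0)"
proof -
  have "(+) (0(x := 1)) -` {d} = (if 1 \<le> d x then {d(x := d x - 1)} else {})"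
    by (auto simp: fun_eq_iff)
  then show ?thesis by (simp add: pmf_map measure_pmf_single)
qed

lemma multinomial_prob_step:
  assumes S: "finite S" and x: "x \<in> S"
  shows "(if 1 \<le> d x then multinomial_prob S p N (d(x := d x - 1)) else 0) * pmf p x =
    real (d x) / real (Suc N) * multinomial_prob S p (Suc N) d"
proof (cases "1 \<le> d x")
  case True
  define d' where "d' = d(x := d x - 1)"
  have "sum d S = d x + sum d (S - {x})" "sum d' S = (d x - 1) + sum d (S - {x})"
    using S x by (simp_all add: sum.remove d'_def)
  then have cond: "((\<forall>i. i \<notin> S \<longrightarrow> d' i = 0) \<and> sum d' S = N) \<longleftrightarrow>
      ((\<forall>i. i \<notin> S \<longrightarrow> d i = 0) \<and> sum d S = Suc N)"
    using True x by (auto simp: d'_def)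
  have "(\<Prod>i\<in>S. fact (d i) :: real) = fact (d x) * (\<Prod>i\<in>S - {x}. fact (d' i))"
    using S x by (simp add: prod.remove d'_def)
  also have "(fact (d x) :: real) = real (d x) * fact (d' x)"
    using True by (simp add: d'_def fact_reduce)
  finally have facts: "(\<Prod>i\<in>S. fact (d i) :: real) = real (d x) * (\<Prod>i\<in>S. fact (d' i))"
    using S x by (simp add: prod.remove mult.assoc)
  have "(\<Prod>i\<in>S. pmf p i ^ d i) = pmf p x ^ d x * (\<Prod>i\<in>S - {x}. pmf p i ^ d' i)"
    using S x by (simp add: prod.remove d'_def)
  also have "pmf p x ^ d x = pmf p x * pmf p x ^ d' x"
    using True by (simp add: d'_def power_eq_if)
  finally have pows: "(\<Prod>i\<in>S. pmf p i ^ d i) = pmf p x * (\<Prod>i\<in>S. pmf p i ^ d' i)"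
    using S x by (simp add: prod.remove mult.assoc)
  have "(\<Prod>i\<in>S. fact (d' i) :: real) \<noteq> 0"
    by (simp add: prod_zero_iff S)
  then show ?thesis
    using True cond unfolding multinomial_prob_def d'_def[symmetric] facts pows
    by (auto simp: field_simps)
qed (simp add: multinomial_prob_def)

lemma pmf_multinomial_pmf:
  assumes S: "finite S" and p: "set_pmf p \<subseteq> S"
  shows "pmf (multinomial_pmf N p) d = multinomial_prob S p N d"
proof (induction N arbitrary: d)
  case 0
  have "((\<forall>i. i \<notin> S \<longrightarrow> d i = 0) \<and> sum d S = 0) \<longleftrightarrow> d = 0"
    using S by (auto simp: fun_eq_iff sum_eq_0_iff)
  then show ?case by (auto simp: multinomial_pmf_def multinomial_prob_def indicator_def)
next
  case (Suc N)
  have "multinomial_pmf (Suc N) p = bind_pmf p (\<lambda>x. map_pmf ((+) (0(x := 1))) (multinomial_pmf N p))"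
    by (simp add: multinomial_pmf_def add_pmf_map_left add_pmf_return_left)
  then have "pmf (multinomial_pmf (Suc N) p) d =
      measure_pmf.expectation p (\<lambda>x. pmf (map_pmf ((+) (0(x := 1))) (multinomial_pmf N p)) d)"
    by (simp add: pmf_bind)
  also have "\<dots> = (\<Sum>x\<in>S. pmf (map_pmf ((+) (0(x := 1))) (multinomial_pmf N p)) d * pmf p x)"
    by (rule integral_measure_pmf_real) (use S p in auto)
  also have "\<dots> = (\<Sum>x\<in>S. (if 1 \<le> d x then multinomial_prob S p N (d(x := d x - 1)) else 0) * pmf p x)"
    by (simp only: pmf_map_add_unit Suc.IH)
  also have "\<dots> = (\<Sum>x\<in>S. real (d x) / real (Suc N) * multinomial_prob S p (Suc N) d)"
    using S by (intro sum.cong refl multinomial_prob_step)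
  also have "\<dots> = multinomial_prob S p (Suc N) d"
    by (auto simp: multinomial_prob_def simp flip: sum_distrib_right sum_divide_distrib of_nat_sum)
  finally show ?case .
qed

lemma bind_pois_multinomial:
  assumes S: "finite S" and p: "set_pmf p \<subseteq> S" and n: "0 \<le> n"
  shows "bind_pmf (pois n) (\<lambda>N. multinomial_pmf N p) = Pi_pmf S 0 (\<lambda>i. pois (n * pmf p i))"
proof (rule pmf_eqI)
  fix d :: "'a \<Rightarrow> nat"
  let ?s = "sum d S"
  have "pmf (bind_pmf (pois n) (\<lambda>N. multinomial_pmf N p)) d = multinomial_prob S p ?s d * pmf (pois n) ?s"
    by (simp add: pmf_bind pmf_multinomial_pmf[OF S p] integral_measure_pmf_real[where A = "{?s}"]
        multinomial_prob_def split: if_splits)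
  also have "\<dots> = pmf (Pi_pmf S 0 (\<lambda>i. pois (n * pmf p i))) d"
  proof (cases "\<forall>i. i \<notin> S \<longrightarrow> d i = 0")
    case True
    have "exp (- n) = (\<Prod>i\<in>S. exp (- (n * pmf p i)))"
      using S p by (simp add: exp_sum[symmetric] sum_negf sum_distrib_left[symmetric] sum_pmf_eq_1)
    moreover have "n ^ ?s = (\<Prod>i\<in>S. n ^ d i)"
      by (rule power_sum)
    moreover have "(\<Prod>i\<in>S. fact (d i) :: real) \<noteq> 0"
      by (simp add: prod_zero_iff S)
    ultimately show ?thesis
      using S True n
      by (simp add: multinomial_prob_def pmf_Pi pmf_pois prod.distrib prod_dividef power_mult_distrib
          field_simps)
  qed (use S in \<open>auto simp: multinomial_prob_def pmf_Pi\<close>)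
  finally show "pmf (bind_pmf (pois n) (\<lambda>N. multinomial_pmf N p)) d = pmf (Pi_pmf S 0 (\<lambda>i. pois (n * pmf p i))) d" .
qed

lemma sum_pmf_replicate_Pi_pois:
  assumes "finite S" "0 \<le> r"
  shows "sum_pmf (replicate N (Pi_pmf S 0 (\<lambda>_. pois r))) = Pi_pmf S 0 (\<lambda>_. pois (real N * r))"
proof (induction N)
  case (Suc N)
  then show ?case
    using assms by (simp add: add_pmf_Pi_pmf add_pmf_pois algebra_simps)
qed (use assms in \<open>simp add: zero_fun_def\<close>)

lemma Pi_pmf_pois_eq_bind_multinomial:
  assumes S: "finite S" and p: "set_pmf p \<subseteq> S" and n: "0 \<le> n" and lam: "0 \<le> lam"
  shows "Pi_pmf S 0 (\<lambda>i. pois (n * pmf p i + lam)) =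
    bind_pmf (pois n) (\<lambda>N. add_pmf (multinomial_pmf N p) (Pi_pmf S 0 (\<lambda>_. pois lam)))"
proof -
  have "Pi_pmf S 0 (\<lambda>i. pois (n * pmf p i + lam)) = Pi_pmf S 0 (\<lambda>i. add_pmf (pois (n * pmf p i)) (pois lam))"
    using n lam by (intro Pi_pmf_cong refl) (simp add: add_pmf_pois)
  also have "\<dots> = add_pmf (Pi_pmf S 0 (\<lambda>i. pois (n * pmf p i))) (Pi_pmf S 0 (\<lambda>_. pois lam))"
    using S by (simp add: add_pmf_Pi_pmf)
  also have "\<dots> = bind_pmf (pois n) (\<lambda>N. add_pmf (multinomial_pmf N p) (Pi_pmf S 0 (\<lambda>_. pois lam)))"
    using S p n by (simp add: bind_pois_multinomial[symmetric] add_pmf_bind_left)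
  finally show ?thesis .
qed

lemma sum_list_unit_vectors:
  "distinct js \<Longrightarrow> (\<Sum>j\<leftarrow>js. (0 :: 'a \<Rightarrow> nat)(j := of_bool (x = j))) = (if x \<in> set js then 0(x := 1) else 0)"
  by (induction js) (auto simp: fun_eq_iff)

definition count_ones :: "nat set \<Rightarrow> (nat \<times> bool) multiset \<Rightarrow> nat \<Rightarrow> nat" where
  "count_ones S M = (\<lambda>j. if j \<in> S then count M (j, True) else 0)"

lemma count_ones_empty: "count_ones S {#} = 0"
  by (simp add: count_ones_def fun_eq_iff)

lemma count_ones_add: "count_ones S (A + B) = count_ones S A + count_ones S B"
  by (auto simp: count_ones_def fun_eq_iff)

lemma count_ones_coord_msgs:
  assumes j: "j \<in> S" and lam: "0 < lam" and N: "0 < N"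
  shows "map_pmf (count_ones S) (coord_msgs lam N j x) =
    add_pmf (return_pmf (0(j := of_bool (x = j)))) (map_pmf (\<lambda>c. 0(j := c)) (pois (lam / real N / 2)))"
proof -
  define a :: "nat \<Rightarrow> nat" where "a = 0(j := of_bool (x = j))"
  have ones: "count_ones S ({#(j, x = j)#} + mset (map (Pair j) bs)) = a + 0(j := length (filter id bs))" for bs
  proof -
    have "count (mset (map (Pair j) bs)) (i, True) = (if i = j then length (filter id bs) else 0)" for i
      by (induction bs) (auto simp: id_def)
    then show ?thesis using j by (auto simp: count_ones_def a_def fun_eq_iff id_def)
  qed
  have "map_pmf (count_ones S) (coord_msgs lam N j x) = bind_pmf (pois (lam / real N))
      (\<lambda>s. map_pmf (\<lambda>bs. a + 0(j := length (filter id bs))) (replicate_pmf s (bernoulli_pmf (1/2))))"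
    using lam N by (simp only: coord_msgs_def pois_eq_poisson_pmf map_bind_pmf map_return_pmf ones map_pmf_def bind_assoc_pmf bind_return_pmf
        divide_pos_pos of_nat_0_less_iff)
  also have "\<dots> = bind_pmf (pois (lam / real N)) (\<lambda>s. map_pmf (\<lambda>c. a + 0(j := c)) (binomial_pmf s (1/2)))"
    by (simp add: binomial_pmf_altdef map_pmf_comp)
  also have "\<dots> = map_pmf (\<lambda>c. a + 0(j := c)) (pois (lam / real N / 2))"
    using lam by (simp add: map_bind_pmf[symmetric] bind_pois_binomial mult.commute)
  also have "\<dots> = add_pmf (return_pmf a) (map_pmf (\<lambda>c. 0(j := c)) (pois (lam / real N / 2)))"
    by (simp add: add_pmf_return_left map_pmf_comp comp_def)
  finally show ?thesis unfolding a_def .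
qed

lemma count_ones_user_msgs:
  assumes p: "set_pmf p \<subseteq> {1..k}" and lam: "0 < lam" and N: "0 < N"
  shows "map_pmf (count_ones {1..k}) (user_msgs k lam N p) =
    add_pmf (map_pmf (\<lambda>x. 0(x := 1)) p) (Pi_pmf {1..k} 0 (\<lambda>_. pois (lam / real N / 2)))"
proof -
  define js where "js = [1..<k+1]"
  have js: "distinct js" "set js = {1..k}"
    by (auto simp: js_def)
  let ?noise = "\<lambda>j. map_pmf (\<lambda>c. 0(j := c)) (pois (lam / real N / 2))"
  have "map_pmf (count_ones {1..k}) (user_msgs k lam N p) =
      bind_pmf p (\<lambda>x. sum_pmf (map (\<lambda>j. map_pmf (count_ones {1..k}) (coord_msgs lam N j x)) js))"
    unfolding user_msgs_def map_bind_pmf msum_pmf_eq_sum_pmf js_def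
    by (simp only: map_sum_pmf count_ones_empty count_ones_add map_map comp_def)
  also have "\<dots> = bind_pmf p (\<lambda>x.
      add_pmf (sum_pmf (map (\<lambda>j. return_pmf (0(j := of_bool (x = j)))) js)) (sum_pmf (map ?noise js)))"
    unfolding sum_pmf_map_add[symmetric] using lam N js
    by (intro bind_pmf_cong refl arg_cong[where f = sum_pmf] map_cong) (auto simp: count_ones_coord_msgs)
  also have "\<dots> = bind_pmf p (\<lambda>x. add_pmf (return_pmf (0(x := 1))) (Pi_pmf {1..k} 0 (\<lambda>_. pois (lam / real N / 2))))"
    using p js by (intro bind_pmf_cong refl)
      (auto simp: sum_pmf_return sum_list_unit_vectors sum_pmf_Pi_pmf_singletons)
  also have "\<dots> = add_pmf (map_pmf (\<lambda>x. 0(x := 1)) p) (Pi_pmf {1..k} 0 (\<lambda>_. pois (lam / real N / 2)))"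
    by (simp add: add_pmf_map_left)
  finally show ?thesis .
qed

text \<open>Without users there are no noise messages either; this is the only place where the protocol
  differs from independent Poisson counts.\<close>
lemma count_ones_protocol:
  assumes n: "0 < n" and lam: "0 < lam" and p: "set_pmf p \<subseteq> {1..k}"
  shows "map_pmf (count_ones {1..k}) (protocol k n lam p) = bind_pmf (pois n)
    (\<lambda>N. add_pmf (multinomial_pmf N p) (Pi_pmf {1..k} 0 (\<lambda>_. pois (if N = 0 then 0 else lam / 2))))"
  unfolding protocol_def map_bind_pmf msum_pmf_eq_sum_pmf pois_eq_poisson_pmf[OF n, symmetric]
proof (intro bind_pmf_cong refl)
  fix N :: nat
  show "map_pmf (count_ones {1..k}) (sum_pmf (replicate N (user_msgs k lam N p))) =
    add_pmf (multinomial_pmf N p) (Pi_pmf {1..k} 0 (\<lambda>_. pois (if N = 0 then 0 else lam / 2)))"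
  proof (cases "N = 0")
    case True
    have "Pi_pmf {1..k} 0 (\<lambda>_. pois 0) = return_pmf (0 :: nat \<Rightarrow> nat)"
      by (simp add: zero_fun_def)
    with True show ?thesis by (simp add: multinomial_pmf_def count_ones_empty)
  next
    case False
    then have N: "0 < N" by simp
    have "map_pmf (count_ones {1..k}) (sum_pmf (replicate N (user_msgs k lam N p))) =
        sum_pmf (replicate N (add_pmf (map_pmf (\<lambda>x. 0(x := 1)) p) (Pi_pmf {1..k} 0 (\<lambda>_. pois (lam / real N / 2)))))"
      by (simp only: map_sum_pmf count_ones_empty count_ones_add map_replicate count_ones_user_msgs[OF p lam N])
    also have "\<dots> = add_pmf (multinomial_pmf N p) (Pi_pmf {1..k} 0 (\<lambda>_. pois (real N * (lam / real N / 2))))"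
      using lam by (simp add: sum_pmf_replicate_add multinomial_pmf_def sum_pmf_replicate_Pi_pois)
    finally show ?thesis
      using N by simp
  qed
qed

lemma Zstat_eq_chi2_dev_sum:
  assumes "0 < n"
  shows "n / real k * Zstat k n lam M - (\<Sum>j\<in>{1..k}. (L j - mu k n lam)^2) =
    (\<Sum>j\<in>{1..k}. chi2_dev (mu k n lam) (L j) (count_ones {1..k} M j))"
proof (cases "k = 0")
  case False
  have "Zstat k n lam M = real k / n * (\<Sum>j\<in>{1..k}.
      chi2_dev (mu k n lam) (L j) (count_ones {1..k} M j) + (L j - mu k n lam)^2)"
    unfolding Zstat_def
    by (intro arg_cong[where f = "(*) _"] sum.cong) (auto simp: chi2_dev_def count_ones_def Nj_def)
  then show ?thesis
    using False assms by (simp add: sum.distrib)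
qed simp

lemma protocol_Zstat_deviation:
  fixes k :: nat and n lam a :: real and p :: "nat pmf"
  assumes n: "0 < n" and lam: "0 < lam" and p: "set_pmf p \<subseteq> {1..k}" and a: "0 < a"
  defines "L \<equiv> \<lambda>j. n * pmf p j + lam / 2"
  defines "D \<equiv> \<Sum>j\<in>{1..k}. (L j - mu k n lam)^2"
    and "V \<equiv> \<Sum>j\<in>{1..k}. 2 * L j ^ 2 + 4 * (L j - mu k n lam)^2 * L j"
  shows "measure_pmf.prob (protocol k n lam p) {M. a \<le> \<bar>n / real k * Zstat k n lam M - D\<bar>}
    \<le> V / a^2 + exp (- n)"
proof -
  let ?m = "mu k n lam"
  let ?E = "{v. a \<le> \<bar>\<Sum>j\<in>{1..k}. chi2_dev ?m (L j) (v j)\<bar>}"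
  have L: "0 \<le> L j" for j
    using n lam by (simp add: L_def)
  have model: "Pi_pmf {1..k} 0 (\<lambda>j. pois (L j)) =
      bind_pmf (pois n) (\<lambda>N. add_pmf (multinomial_pmf N p) (Pi_pmf {1..k} 0 (\<lambda>_. pois (lam / 2))))"
    unfolding L_def using n lam p by (intro Pi_pmf_pois_eq_bind_multinomial) auto
  have "{M. a \<le> \<bar>n / real k * Zstat k n lam M - D\<bar>} = count_ones {1..k} -` ?E"
    unfolding D_def Zstat_eq_chi2_dev_sum[OF n] by auto
  then have "measure_pmf.prob (protocol k n lam p) {M. a \<le> \<bar>n / real k * Zstat k n lam M - D\<bar>} =
      measure_pmf.prob (map_pmf (count_ones {1..k}) (protocol k n lam p)) ?E"
    by (simp add: measure_map_pmf)
  also have "\<dots> \<le> measure_pmf.prob (Pi_pmf {1..k} 0 (\<lambda>j. pois (L j))) ?E + pmf (pois n) 0"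
    unfolding count_ones_protocol[OF n lam p] model by (rule prob_bind_pmf_le_if_eq_except) simp
  also have "measure_pmf.prob (Pi_pmf {1..k} 0 (\<lambda>j. pois (L j))) ?E \<le>
      (\<Sum>j\<in>{1..k}. measure_pmf.expectation (pois (L j)) (\<lambda>y. (chi2_dev ?m (L j) y)^2)) / a^2"
    by (rule Pi_pmf_sum_components_Chebyshev) (simp_all add: pois_chi2_dev L a)
  also have "\<dots> = V / a^2"
    unfolding V_def using L by (simp add: pois_chi2_dev)
  finally show ?thesis
    using n by (simp add: pmf_pois)
qed

lemma protocol_Zstat_tails:
  fixes k :: nat and n lam t :: real and p :: "nat pmf"
  assumes n: "0 < n" and lam: "0 < lam" and p: "set_pmf p \<subseteq> {1..k}"
  defines "L \<equiv> \<lambda>j. n * pmf p j + lam / 2"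
  defines "D \<equiv> \<Sum>j\<in>{1..k}. (L j - mu k n lam)^2"
    and "V \<equiv> \<Sum>j\<in>{1..k}. 2 * L j ^ 2 + 4 * (L j - mu k n lam)^2 * L j"
  shows "D < t * n / real k \<Longrightarrow> measure_pmf.prob (protocol k n lam p) {M. t \<le> Zstat k n lam M}
      \<le> V / (t * n / real k - D)^2 + exp (- n)"
    and "t * n / real k < D \<Longrightarrow> measure_pmf.prob (protocol k n lam p) {M. Zstat k n lam M \<le> t}
      \<le> V / (D - t * n / real k)^2 + exp (- n)"
proof -
  let ?Q = "protocol k n lam p" and ?Y = "\<lambda>M. n / real k * Zstat k n lam M"
  have scale: "n / real k * t = t * n / real k"
    by simp
  have mono: "n / real k * x \<le> n / real k * y" if "x \<le> y" for x y
    using that n by (intro mult_left_mono) auto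
  have up: "x \<le> y \<Longrightarrow> x - D \<le> \<bar>y - D\<bar>" and down: "x \<le> y \<Longrightarrow> D - y \<le> \<bar>x - D\<bar>" for x y :: real
    using abs_ge_self[of "y - D"] abs_ge_minus_self[of "x - D"] by linarith+
  show "measure_pmf.prob ?Q {M. t \<le> Zstat k n lam M} \<le> V / (t * n / real k - D)^2 + exp (- n)"
    if "D < t * n / real k"
  proof -
    have "measure_pmf.prob ?Q {M. t \<le> Zstat k n lam M}
        \<le> measure_pmf.prob ?Q {M. t * n / real k - D \<le> \<bar>?Y M - D\<bar>}"
      using up[OF mono] by (intro measure_pmf.finite_measure_mono) (auto simp flip: scale)
    also have "\<dots> \<le> V / (t * n / real k - D)^2 + exp (- n)"
      using that protocol_Zstat_deviation[OF n lam p, of "t * n / real k - D"]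
      unfolding D_def V_def L_def by simp
    finally show ?thesis .
  qed
  show "measure_pmf.prob ?Q {M. Zstat k n lam M \<le> t} \<le> V / (D - t * n / real k)^2 + exp (- n)"
    if "t * n / real k < D"
  proof -
    have "measure_pmf.prob ?Q {M. Zstat k n lam M \<le> t}
        \<le> measure_pmf.prob ?Q {M. D - t * n / real k \<le> \<bar>?Y M - D\<bar>}"
      using down[OF mono] by (intro measure_pmf.finite_measure_mono) (auto simp flip: scale)
    also have "\<dots> \<le> V / (D - t * n / real k)^2 + exp (- n)"
      using that protocol_Zstat_deviation[OF n lam p, of "D - t * n / real k"]
      unfolding D_def V_def L_def by simp
    finally show ?thesis .
  qed
qed

section \<open>The sample-size condition\<close>

lemma sample_size_consequences:
  fixes K n m \<alpha> :: real
  assumes K: "1 \<le> K" and n: "0 < n" and \<alpha>: "0 < \<alpha>" "\<alpha> \<le> 1" and m: "n / K \<le> m"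
    and hyp: "40 * (K powr (3/4) * sqrt m) / \<alpha> \<le> n"
  shows "1600 * K * sqrt K * m \<le> (n * \<alpha>)^2" and "1600 \<le> n" and "1600 \<le> sqrt K * m"
proof -
  have "0 \<le> n / K" using n K by simp
  then have m0: "0 \<le> m" using m by linarith
  have "(K powr (3/4))^2 = K powr (3/4 + 3/4)"
    by (simp add: power2_eq_square flip: powr_add)
  also have "\<dots> = K powr 1 * K powr (1/2)"
    by (subst powr_add [symmetric]) simp
  finally have K34: "(K powr (3/4))^2 = K * sqrt K"
    using K by (simp add: powr_half_sqrt)
  have "40 * (K powr (3/4) * sqrt m) \<le> n * \<alpha>"
    using hyp \<alpha> by (simp add: field_simps)
  then have "(40 * (K powr (3/4) * sqrt m))^2 \<le> (n * \<alpha>)^2"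
    using m0 by (intro power_mono) auto
  then show H: "1600 * K * sqrt K * m \<le> (n * \<alpha>)^2"
    using m0 by (simp add: power_mult_distrib K34)
  have "n \<le> K * m" using m K by (simp add: field_simps)
  then have "1600 * sqrt K * n \<le> 1600 * sqrt K * (K * m)"
    using K by (intro mult_left_mono) auto
  also have "\<dots> \<le> n * (n * \<alpha>^2)"
    using H by (simp add: power_mult_distrib power2_eq_square mult_ac)
  finally have "1600 * sqrt K \<le> n * \<alpha>^2"
    using n by (simp add: mult.commute[of _ n])
  also have "\<dots> \<le> n"
    using n \<alpha> by (simp add: mult_left_le power_le_one)
  finally have nK: "1600 * sqrt K \<le> n" .
  moreover have "1 \<le> sqrt K" using K by simp
  ultimately show "1600 \<le> n" by linarith
  have "sqrt K * (sqrt K * m) = K * m"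
    using K by (simp add: mult.assoc [symmetric])
  then have "sqrt K * 1600 \<le> sqrt K * (sqrt K * m)"
    using nK \<open>n \<le> K * m\<close> by linarith
  then show "1600 \<le> sqrt K * m"
    using K by (simp add: mult_le_cancel_left_pos)
qed

lemma exp_minus_le_one_twelfth:
  assumes "1600 \<le> (n::real)"
  shows "exp (- n) \<le> 1 / 12"
proof -
  have "12 \<le> exp n"
    using exp_ge_add_one_self[of n] assms by linarith
  then show ?thesis
    by (simp add: exp_minus field_simps)
qed

lemma uniform_case_arith:
  fixes K n m \<alpha> :: real
  assumes K: "0 < K" and n\<alpha>: "0 < n * \<alpha>" and m: "0 \<le> m"
    and H: "1600 * K * sqrt K * m \<le> (n * \<alpha>)^2"
  shows "2 * K * m^2 / (2 * n * \<alpha>^2 * n / K)^2 \<le> 1/4"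
proof -
  have "(1600 * K * sqrt K * m)^2 \<le> ((n * \<alpha>)^2)^2"
    using H K m by (intro power_mono) auto
  moreover have "(1600 * K * sqrt K * m)^2 = 2560000 * (K^3 * m^2)"
    using K by (simp add: power_mult_distrib power3_eq_cube power2_eq_square)
  moreover have "0 \<le> K^3 * m^2"
    using K by simp
  ultimately have "2 * (K^3 * m^2) \<le> ((n * \<alpha>)^2)^2"
    by linarith
  moreover have "2 * K * m^2 / (2 * n * \<alpha>^2 * n / K)^2 = K^3 * m^2 / (2 * ((n * \<alpha>)^2)^2)"
    using K by (simp add: power_mult_distrib power2_eq_square power3_eq_cube field_simps)
  moreover have "0 < 2 * ((n * \<alpha>)^2)^2"
    using n\<alpha> by (metis mult_pos_pos zero_less_numeral zero_less_power)
  ultimately show ?thesis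
    by (simp only: pos_divide_le_eq)
qed

lemma sum_poisson_variance_le:
  fixes x :: "'a \<Rightarrow> real"
  assumes S: "finite S" and m: "0 \<le> m"
  defines "D \<equiv> \<Sum>j\<in>S. (x j)^2"
  shows "(\<Sum>j\<in>S. 2 * (m + x j)^2 + 4 * (x j)^2 * (m + x j))
    \<le> 4 * (real (card S) * m^2) + 4 * D + 4 * (m * D) + 4 * (D * sqrt D)"
proof -
  have "2 * (m + x j)^2 + 4 * (x j)^2 * (m + x j) \<le> 4 * m^2 + (4 + 4 * m + 4 * sqrt D) * (x j)^2"
    if j: "j \<in> S" for j
  proof -
    have "(x j)^2 \<le> D"
      unfolding D_def using S j by (intro member_le_sum) auto
    then have "x j \<le> sqrt D"
      using real_sqrt_le_mono by fastforce
    then have "(x j)^2 * x j \<le> (x j)^2 * sqrt D"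
      by (intro mult_left_mono) auto
    moreover have "0 \<le> (m - x j)^2"
      by simp
    ultimately show ?thesis
      by (simp add: power2_eq_square algebra_simps)
  qed
  then have "(\<Sum>j\<in>S. 2 * (m + x j)^2 + 4 * (x j)^2 * (m + x j))
      \<le> (\<Sum>j\<in>S. 4 * m^2 + (4 + 4 * m + 4 * sqrt D) * (x j)^2)"
    by (rule sum_mono)
  also have "\<dots> = 4 * (real (card S) * m^2) + 4 * D + 4 * (m * D) + 4 * (D * sqrt D)"
    by (simp add: D_def sum.distrib sum_distrib_left sum_distrib_right algebra_simps)
  finally show ?thesis .
qed

lemma dTV_unif_sum_squares:
  assumes k: "0 < k" and \<alpha>: "0 \<le> \<alpha>" and far: "\<alpha> < dTV k p (unif k)"
  shows "4 * \<alpha>^2 / real k \<le> (\<Sum>j\<in>{1..k}. (pmf p j - 1 / real k)^2)"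
proof -
  have "2 * \<alpha> < (\<Sum>j\<in>{1..k}. \<bar>pmf p j - 1 / real k\<bar>)"
    using far by (simp add: dTV_def unif_def)
  then have "(2 * \<alpha>)^2 \<le> (\<Sum>j\<in>{1..k}. \<bar>pmf p j - 1 / real k\<bar>)^2"
    using \<alpha> by (intro power_mono) auto
  also have "\<dots> \<le> (\<Sum>j\<in>{1..k}. (pmf p j - 1 / real k)^2) * real k"
    using sum_squared_le_sum_of_squares[of "\<lambda>j. \<bar>pmf p j - 1 / real k\<bar>" "{1..k}"] by simp
  finally show ?thesis
    using k by (simp add: field_simps power_mult_distrib)
qed

lemma chebyshev_numerator_le:
  fixes K m D :: real
  assumes K: "1 \<le> K" and m: "0 \<le> m" and Km: "1600 \<le> sqrt K * m" and D: "6400 * (sqrt K * m) \<le> D"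
  shows "4 * (K * m^2) + 4 * D + 4 * (m * D) + 4 * (D * sqrt D) \<le> D^2 / 16"
proof -
  have D_big: "6400 * 1600 \<le> D"
    using D Km by linarith
  have "(6400 * (sqrt K * m))^2 \<le> D^2"
    using D K m by (intro power_mono) auto
  moreover have "(6400 * (sqrt K * m))^2 = 40960000 * (K * m^2)"
    using K by (simp add: power_mult_distrib)
  moreover have "0 \<le> K * m^2"
    using K by simp
  ultimately have t1: "256 * (K * m^2) \<le> D^2"
    by linarith
  have t2: "256 * D \<le> D^2"
    using mult_right_mono[of 256 D D] D_big by (simp add: power2_eq_square)
  have "1 * m \<le> sqrt K * m"
    using K m by (intro mult_right_mono) auto
  then have "256 * m \<le> D"
    using D m by linarith
  then have t3: "256 * (m * D) \<le> D^2"
    using mult_right_mono[of "256 * m" D D] D_big by (simp add: power2_eq_square mult.assoc)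
  have "256 \<le> sqrt D"
    using D_big by (simp add: real_le_rsqrt)
  then have "256 * sqrt D \<le> D"
    using mult_right_mono[of 256 "sqrt D" "sqrt D"] D_big by simp
  then have t4: "256 * (D * sqrt D) \<le> D^2"
    using mult_left_mono[of "256 * sqrt D" D D] D_big by (simp add: power2_eq_square mult_ac)
  from t1 t2 t3 t4 show ?thesis
    by linarith
qed

lemma far_case_arith:
  fixes K m D V n \<alpha> :: real
  assumes K: "1 \<le> K" and m: "0 \<le> m" and Km: "1600 \<le> sqrt K * m"
    and H: "1600 * K * sqrt K * m \<le> (n * \<alpha>)^2" and D: "4 * (n * \<alpha>)^2 / K \<le> D"
    and V: "V \<le> 4 * (K * m^2) + 4 * D + 4 * (m * D) + 4 * (D * sqrt D)"
  shows "V / (D - 2 * n * \<alpha>^2 * n / K)^2 \<le> 1/4"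
proof -
  have "4 * (1600 * K * sqrt K * m) \<le> 4 * (n * \<alpha>)^2"
    using H by linarith
  then have "4 * (1600 * K * sqrt K * m) / K \<le> 4 * (n * \<alpha>)^2 / K"
    using K by (intro divide_right_mono) simp_all
  also have "4 * (1600 * K * sqrt K * m) / K = 6400 * (sqrt K * m)"
    using K by simp
  finally have D6400: "6400 * (sqrt K * m) \<le> D"
    using D by linarith
  then have D_pos: "0 < D"
    using Km by linarith
  have half: "X \<le> D \<Longrightarrow> D / 2 \<le> D - X / 2" for X :: real
    by simp
  have "D / 2 \<le> D - (4 * (n * \<alpha>)^2 / K) / 2"
    by (rule half[OF D])
  also have "(4 * (n * \<alpha>)^2 / K) / 2 = 2 * n * \<alpha>^2 * n / K"
    by (simp add: power_mult_distrib power2_eq_square)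
  finally have "(D / 2)^2 \<le> (D - 2 * n * \<alpha>^2 * n / K)^2"
    using D_pos by (intro power_mono) auto
  moreover have "(D / 2)^2 = D^2 / 4"
    by (simp add: power_divide)
  moreover have "0 < D^2"
    using D_pos by simp
  ultimately show ?thesis
    using V chebyshev_numerator_le[OF K m Km D6400] by (subst pos_divide_le_eq) linarith+
qed

lemma protocol_unif_Zstat_ge:
  fixes k :: nat and n lam \<alpha> :: real
  assumes k: "0 < k" and n: "0 < n" and lam: "0 < lam" and \<alpha>: "0 < \<alpha>" "\<alpha> \<le> 1"
    and size: "40 * (real k powr (3/4) * sqrt (mu k n lam)) / \<alpha> \<le> n"
  shows "measure_pmf.prob (protocol k n lam (unif k)) {M. 2 * n * \<alpha>^2 \<le> Zstat k n lam M} \<le> 1/3"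
proof -
  let ?m = "mu k n lam"
  note consequences = sample_size_consequences[OF _ n \<alpha> _ size]
  have p: "set_pmf (unif k) \<subseteq> {1..k}"
    using k by (simp add: unif_def)
  have L: "n * pmf (unif k) j + lam / 2 = ?m" if "j \<in> {1..k}" for j
    using that by (simp add: unif_def mu_def)
  have "measure_pmf.prob (protocol k n lam (unif k)) {M. 2 * n * \<alpha>^2 \<le> Zstat k n lam M}
      \<le> 2 * real k * ?m^2 / (2 * n * \<alpha>^2 * n / real k)^2 + exp (- n)"
    using protocol_Zstat_tails(1)[OF n lam p, of "2 * n * \<alpha>^2"] k n \<alpha>
    by (simp add: L mult_ac)
  also have "2 * real k * ?m^2 / (2 * n * \<alpha>^2 * n / real k)^2 \<le> 1/4"
    using k n \<alpha> lam consequences(1) by (intro uniform_case_arith) (simp_all add: mu_def)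
  also have "exp (- n) \<le> 1/12"
    using k lam consequences(2) by (intro exp_minus_le_one_twelfth) (simp add: mu_def)
  finally show ?thesis by simp
qed

lemma protocol_far_Zstat_le:
  fixes k :: nat and n lam \<alpha> :: real and p :: "nat pmf"
  assumes k: "0 < k" and n: "0 < n" and lam: "0 < lam" and \<alpha>: "0 < \<alpha>" "\<alpha> \<le> 1"
    and p: "set_pmf p \<subseteq> {1..k}" and far: "\<alpha> < dTV k p (unif k)"
    and size: "40 * (real k powr (3/4) * sqrt (mu k n lam)) / \<alpha> \<le> n"
  shows "measure_pmf.prob (protocol k n lam p) {M. Zstat k n lam M \<le> 2 * n * \<alpha>^2} \<le> 1/3"
proof -
  let ?m = "mu k n lam"
  define D where "D = (\<Sum>j\<in>{1..k}. (n * pmf p j + lam / 2 - ?m)^2)"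
  define V where "V = (\<Sum>j\<in>{1..k}. 2 * (n * pmf p j + lam / 2)^2 +
    4 * (n * pmf p j + lam / 2 - ?m)^2 * (n * pmf p j + lam / 2))"
  note consequences = sample_size_consequences[OF _ n \<alpha> _ size]
  have m: "0 \<le> ?m" "n / real k \<le> ?m"
    using n lam by (simp_all add: mu_def)
  have "n^2 * (4 * \<alpha>^2 / real k) \<le> n^2 * (\<Sum>j\<in>{1..k}. (pmf p j - 1 / real k)^2)"
    using dTV_unif_sum_squares[OF k _ far] \<alpha> by (intro mult_left_mono) auto
  also have "\<dots> = D"
    by (simp add: D_def mu_def sum_distrib_left power_mult_distrib[symmetric] algebra_simps)
  finally have D_ge: "4 * (n * \<alpha>)^2 / real k \<le> D"
    by (simp add: power_mult_distrib mult_ac)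
  have V_le: "V \<le> 4 * (real k * ?m^2) + 4 * D + 4 * (?m * D) + 4 * (D * sqrt D)"
    using sum_poisson_variance_le[of "{1..k}" ?m "\<lambda>j. n * pmf p j + lam / 2 - ?m"] m
    by (simp add: D_def V_def)
  have half: "0 < X \<Longrightarrow> X \<le> D \<Longrightarrow> X / 2 < D" for X :: real
    by linarith
  have "2 * n * \<alpha>^2 * n / real k = (4 * (n * \<alpha>)^2 / real k) / 2"
    by (simp add: power_mult_distrib power2_eq_square)
  also have "\<dots> < D"
    using k n \<alpha> D_ge by (intro half) simp_all
  finally have "measure_pmf.prob (protocol k n lam p) {M. Zstat k n lam M \<le> 2 * n * \<alpha>^2}
      \<le> V / (D - 2 * n * \<alpha>^2 * n / real k)^2 + exp (- n)"
    using protocol_Zstat_tails(2)[OF n lam p] unfolding D_def V_def by simp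
  also have "V / (D - 2 * n * \<alpha>^2 * n / real k)^2 \<le> 1/4"
    using k m consequences D_ge V_le by (intro far_case_arith) simp_all
  also have "exp (- n) \<le> 1/12"
    using k m consequences(2) by (intro exp_minus_le_one_twelfth) simp
  finally show ?thesis by simp
qed

theorem lemma3p6:
  "\<exists>C::real. C > 0 \<and>
    (\<forall>(k::nat) (n::real) (lam::real) (\<alpha>::real) (p::nat pmf).
       k \<ge> 2 \<longrightarrow> n > 0 \<longrightarrow> lam > 0 \<longrightarrow> 0 < \<alpha> \<longrightarrow> \<alpha> \<le> 1 \<longrightarrow>
       set_pmf p \<subseteq> {1..k} \<longrightarrow>
       n \<ge> C * (real k powr (3/4) * sqrt (mu k n lam)) / \<alpha> \<longrightarrow>
       (p = unif k \<longrightarrow>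
          measure_pmf.prob (protocol k n lam p) {M. Zstat k n lam M \<ge> 2 * n * \<alpha>^2} \<le> 1/3) \<and>
       (dTV k p (unif k) > \<alpha> \<longrightarrow>
          measure_pmf.prob (protocol k n lam p) {M. Zstat k n lam M \<le> 2 * n * \<alpha>^2} \<le> 1/3))"
proof (intro exI[of _ 40] conjI allI impI)
  fix k :: nat and n lam \<alpha> :: real and p :: "nat pmf"
  assume k: "k \<ge> 2" and n: "n > 0" and lam: "lam > 0" and \<alpha>: "0 < \<alpha>" "\<alpha> \<le> 1"
    and p: "set_pmf p \<subseteq> {1..k}" and size: "n \<ge> 40 * (real k powr (3/4) * sqrt (mu k n lam)) / \<alpha>"
  show "p = unif k \<Longrightarrow>
      measure_pmf.prob (protocol k n lam p) {M. Zstat k n lam M \<ge> 2 * n * \<alpha>^2} \<le> 1/3"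
    using protocol_unif_Zstat_ge[of k n lam \<alpha>] k n lam \<alpha> size by simp
  show "dTV k p (unif k) > \<alpha> \<Longrightarrow>
      measure_pmf.prob (protocol k n lam p) {M. Zstat k n lam M \<le> 2 * n * \<alpha>^2} \<le> 1/3"
    using protocol_far_Zstat_le[of k n lam \<alpha> p] k n lam \<alpha> p size by simp
qed simp

end
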